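(* Let $Y$ be a $2$-dimensional $3$-partite weighted simplicial complex with parts $Y(0)=Y[1]\sqcup Y[2]\sqcup Y[3]$. Suppose that for every $v\in Y[1]$, the link $Y_v$ (a bipartite graph between $Y_v[2]$ and $Y_v[3]$) is an $\eta$-bipartite expander. For $i\neq j$, let $A^{i,j}$ be the bipartite operator of the bipartite graph between $Y[i]$ and $Y[j]$. Then $$\lambda(A^{2,3})\le\eta+\lambda(A^{1,2})\,\lambda(A^{1,3}).$$
   Context: **Weighted complex.** $Y$ is weighted by a probability distribution on its triangles $Y(2)$, every triangle having one vertex in each part. This distribution induces measures on edges and vertices by taking a uniformly random sub-face. Link measures are conditional measures. **Bipartite graphs.** The bipartite graph between $Y[i]$ and $Y[j]$ has edges the edges of $Y$ with one endpoint in each of these parts, weighted by the induced measure. **Bipartite expansion.** For a bipartite graph with edge distribution and bipartite operator $Bf(v)=\mathbb E_{w\sim v}f(w)$, let $\lambda(B)=\sup\{\langle Bf,g\rangle:\|f\|=\|g\|=1,\ f\perp\text{constants}\}$. The graph is an $\eta$-bipartite expander if $\lambda(B)\le\eta$. *)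

theory Defs
  imports Main "HOL-Library.Extended_Real" Complex_Main
begin

text \<open>A weighted bipartite graph between (finite) vertex types 'u and 'v is given by
  its edge distribution mu on pairs (u,v). Vertex measures are the marginals.\<close>

definition left_marg :: "('u::finite \<times> 'v::finite \<Rightarrow> real) \<Rightarrow> 'u \<Rightarrow> real" where
  "left_marg mu u = (\<Sum>v\<in>UNIV. mu (u, v))"

definition right_marg :: "('u::finite \<times> 'v::finite \<Rightarrow> real) \<Rightarrow> 'v \<Rightarrow> real" where
  "right_marg mu v = (\<Sum>u\<in>UNIV. mu (u, v))"

text \<open>Bipartite operator: Bf(u) = E_{v ~ u} f(v), i.e. the conditional expectation
  along the edge distribution given the endpoint u (0 on vertices of measure 0).\<close>

definition bip_op :: "('u::finite \<times> 'v::finite \<Rightarrow> real) \<Rightarrow> ('v \<Rightarrow> real) \<Rightarrow> 'u \<Rightarrow> real" where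
  "bip_op mu f u = (\<Sum>v\<in>UNIV. mu (u, v) * f v) / left_marg mu u"

definition inner_L :: "('u::finite \<times> 'v::finite \<Rightarrow> real) \<Rightarrow> ('u \<Rightarrow> real) \<Rightarrow> ('u \<Rightarrow> real) \<Rightarrow> real" where
  "inner_L mu f g = (\<Sum>u\<in>UNIV. left_marg mu u * f u * g u)"

definition inner_R :: "('u::finite \<times> 'v::finite \<Rightarrow> real) \<Rightarrow> ('v \<Rightarrow> real) \<Rightarrow> ('v \<Rightarrow> real) \<Rightarrow> real" where
  "inner_R mu f g = (\<Sum>v\<in>UNIV. right_marg mu v * f v * g v)"

text \<open>Convention: the supremum of the empty set is taken to be 0 (the set is symmetric
  under g \<mapsto> -g, so when nonempty its supremum is \<ge> 0 and inserting 0 changes nothing).\<close>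

definition bip_lambda :: "('u::finite \<times> 'v::finite \<Rightarrow> real) \<Rightarrow> real" where
  "bip_lambda mu = Sup (insert 0
     {inner_L mu (bip_op mu f) g | f g.
        inner_R mu f f = 1 \<and> inner_L mu g g = 1 \<and> inner_R mu f (\<lambda>_. 1) = 0})"

definition bip_expander :: "('u::finite \<times> 'v::finite \<Rightarrow> real) \<Rightarrow> real \<Rightarrow> bool" where
  "bip_expander mu \<eta> \<longleftrightarrow> bip_lambda mu \<le> \<eta>"

text \<open>Triangles are triples (x,y,z) with x in Y[1] (type 'a), y in Y[2] (type 'b),
  z in Y[3] (type 'c); the complex is weighted by a probability distribution w on
  triangles (its support is the set of triangles Y(2)).\<close>

definition tri_dist :: "('a::finite \<times> 'b::finite \<times> 'c::finite \<Rightarrow> real) \<Rightarrow> bool" where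
  "tri_dist w \<longleftrightarrow> (\<forall>t. 0 \<le> w t) \<and> (\<Sum>t\<in>UNIV. w t) = 1"

definition edges12 :: "('a::finite \<times> 'b::finite \<times> 'c::finite \<Rightarrow> real) \<Rightarrow> 'a \<times> 'b \<Rightarrow> real" where
  "edges12 w = (\<lambda>(x, y). \<Sum>z\<in>UNIV. w (x, y, z))"

definition edges13 :: "('a::finite \<times> 'b::finite \<times> 'c::finite \<Rightarrow> real) \<Rightarrow> 'a \<times> 'c \<Rightarrow> real" where
  "edges13 w = (\<lambda>(x, z). \<Sum>y\<in>UNIV. w (x, y, z))"

definition edges23 :: "('a::finite \<times> 'b::finite \<times> 'c::finite \<Rightarrow> real) \<Rightarrow> 'b \<times> 'c \<Rightarrow> real" where
  "edges23 w = (\<lambda>(y, z). \<Sum>x\<in>UNIV. w (x, y, z))"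

definition vert1 :: "('a::finite \<times> 'b::finite \<times> 'c::finite \<Rightarrow> real) \<Rightarrow> 'a \<Rightarrow> real" where
  "vert1 w x = (\<Sum>y\<in>UNIV. \<Sum>z\<in>UNIV. w (x, y, z))"

text \<open>Link of x in Y[1]: the bipartite graph between Y_x[2] and Y_x[3] with the
  conditional distribution of the triangles containing x.\<close>

definition link1 :: "('a::finite \<times> 'b::finite \<times> 'c::finite \<Rightarrow> real) \<Rightarrow> 'a \<Rightarrow> 'b \<times> 'c \<Rightarrow> real" where
  "link1 w x = (\<lambda>(y, z). w (x, y, z) / vert1 w x)"

end

theory Submission imports Defs begin

text \<open>
  Conditioning a triangle on its vertex x in Y[1] writes \<langle>A^{2,3} f, g\<rangle> as the average over x
  of the corresponding forms of the links. In the link of x, split f into its link mean, which is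
  (A^{1,3} f)(x), and the rest: by expansion of the link and AM-GM the centred parts contribute at
  most \<eta> (\<parallel>f\<parallel>^2 + \<parallel>g\<parallel>^2) / 2 = \<eta> on average, while the means contribute
  \<langle>A^{1,3} f, A^{1,2} g\<rangle>. Since f \<bottom> 1, A^{1,3} f has mean zero, so this is at most
  \<lambda>(A^{1,2}) \<parallel>g\<parallel> \<parallel>A^{1,3} f\<parallel>, and \<parallel>A^{1,3} f\<parallel> \<le> \<lambda>(A^{1,3}) \<parallel>f\<parallel>.
\<close>

definition bip_form ::
    "('u::finite \<times> 'v::finite \<Rightarrow> real) \<Rightarrow> ('v \<Rightarrow> real) \<Rightarrow> ('u \<Rightarrow> real) \<Rightarrow> real" where
  "bip_form mu f g = (\<Sum>u\<in>UNIV. \<Sum>v\<in>UNIV. mu (u, v) * f v * g u)"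

lemma left_marg_nonneg: "\<forall>e. 0 \<le> mu e \<Longrightarrow> 0 \<le> left_marg mu u"
  unfolding left_marg_def by (simp add: sum_nonneg)

lemma right_marg_nonneg: "\<forall>e. 0 \<le> mu e \<Longrightarrow> 0 \<le> right_marg mu v"
  unfolding right_marg_def by (simp add: sum_nonneg)

lemma left_marg_eq_0_imp: "\<forall>e. 0 \<le> mu e \<Longrightarrow> left_marg mu u = 0 \<Longrightarrow> mu (u, v) = 0"
  unfolding left_marg_def using sum_nonneg_eq_0_iff[of UNIV "\<lambda>v. mu (u, v)"] by auto

lemma right_marg_eq_0_imp: "\<forall>e. 0 \<le> mu e \<Longrightarrow> right_marg mu v = 0 \<Longrightarrow> mu (u, v) = 0"
  unfolding right_marg_def using sum_nonneg_eq_0_iff[of UNIV "\<lambda>u. mu (u, v)"] by auto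

lemma sum_left_marg_eq_sum_right_marg:
  "(\<Sum>u\<in>UNIV. left_marg mu u) = (\<Sum>v\<in>UNIV. right_marg mu v)"
  unfolding left_marg_def right_marg_def by (rule sum.swap)

lemma inner_L_bip_op:
  assumes "\<forall>e. 0 \<le> mu e"
  shows "inner_L mu (bip_op mu f) g = bip_form mu f g"
  unfolding inner_L_def bip_op_def bip_form_def
proof (rule sum.cong[OF refl])
  fix u
  show "left_marg mu u * ((\<Sum>v\<in>UNIV. mu (u, v) * f v) / left_marg mu u) * g u
        = (\<Sum>v\<in>UNIV. mu (u, v) * f v * g u)"
    using left_marg_eq_0_imp[OF assms, of u]
    by (cases "left_marg mu u = 0") (simp_all add: sum_distrib_right)
qed

lemma inner_R_eq_sum_edges: "inner_R mu f h = (\<Sum>u\<in>UNIV. \<Sum>v\<in>UNIV. mu (u, v) * f v * h v)"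
  unfolding inner_R_def right_marg_def
  by (subst sum.swap) (simp add: sum_distrib_right)

lemma inner_L_eq_sum_edges: "inner_L mu g h = (\<Sum>u\<in>UNIV. \<Sum>v\<in>UNIV. mu (u, v) * g u * h u)"
  unfolding inner_L_def left_marg_def by (simp add: sum_distrib_right)

lemma inner_R_self_nonneg: "\<forall>e. 0 \<le> mu e \<Longrightarrow> 0 \<le> inner_R mu f f"
  unfolding inner_R_def using right_marg_nonneg[of mu] by (auto intro!: sum_nonneg simp: mult.assoc)

lemma inner_L_self_nonneg: "\<forall>e. 0 \<le> mu e \<Longrightarrow> 0 \<le> inner_L mu g g"
  unfolding inner_L_def using left_marg_nonneg[of mu] by (auto intro!: sum_nonneg simp: mult.assoc)

lemma inner_R_const_one: "inner_R mu f (\<lambda>_. 1) = bip_form mu f (\<lambda>_. 1)"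
  unfolding inner_R_eq_sum_edges bip_form_def by simp

lemma bip_form_le_half_norms:
  assumes "\<forall>e. 0 \<le> mu e"
  shows "bip_form mu f g \<le> (inner_R mu f f + inner_L mu g g) / 2"
proof -
  have "bip_form mu f g
        \<le> (\<Sum>u\<in>UNIV. \<Sum>v\<in>UNIV. (mu (u, v) * f v * f v + mu (u, v) * g u * g u) / 2)"
    unfolding bip_form_def
  proof (intro sum_mono)
    fix u v
    have "0 \<le> mu (u, v) * (f v - g u)\<^sup>2" using assms by simp
    then show "mu (u, v) * f v * g u \<le> (mu (u, v) * f v * f v + mu (u, v) * g u * g u) / 2"
      by (simp add: power2_eq_square algebra_simps)
  qed
  also have "\<dots> = (inner_R mu f f + inner_L mu g g) / 2"
    unfolding inner_R_eq_sum_edges inner_L_eq_sum_edges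
    by (simp add: sum.distrib sum_divide_distrib[symmetric])
  finally show ?thesis .
qed

lemma bip_form_eq_0_if_inner_R_0:
  assumes nonneg: "\<forall>e. 0 \<le> mu e" and "inner_R mu f f = 0"
  shows "bip_form mu f g = 0"
proof -
  have "right_marg mu v * f v * f v = 0" for v
    using assms(2) right_marg_nonneg[OF nonneg] unfolding inner_R_def
    by (subst (asm) sum_nonneg_eq_0_iff) (auto intro!: sum_nonneg simp: mult.assoc)
  then have "mu (u, v) * f v = 0" for u v
    using right_marg_eq_0_imp[OF nonneg, of v u] by (cases "right_marg mu v = 0") auto
  then have "mu (u, v) * f v * g u = 0" for u v by simp
  then show ?thesis unfolding bip_form_def by (simp only: sum.neutral_const)
qed

lemma bip_form_eq_0_if_inner_L_0:
  assumes nonneg: "\<forall>e. 0 \<le> mu e" and "inner_L mu g g = 0"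
  shows "bip_form mu f g = 0"
proof -
  have "left_marg mu u * g u * g u = 0" for u
    using assms(2) left_marg_nonneg[OF nonneg] unfolding inner_L_def
    by (subst (asm) sum_nonneg_eq_0_iff) (auto intro!: sum_nonneg simp: mult.assoc)
  then have "mu (u, v) * g u = 0" for u v
    using left_marg_eq_0_imp[OF nonneg, of u v] by (cases "left_marg mu u = 0") auto
  then have "mu (u, v) * f v * g u = 0" for u v by (simp add: mult.commute mult.left_commute)
  then show ?thesis unfolding bip_form_def by (simp only: sum.neutral_const)
qed

lemma bdd_above_bip_lambda_values:
  assumes "\<forall>e. 0 \<le> mu e"
  shows "bdd_above (insert 0 {inner_L mu (bip_op mu f) g | f g.
           inner_R mu f f = 1 \<and> inner_L mu g g = 1 \<and> inner_R mu f (\<lambda>_. 1) = 0})"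
proof (rule bdd_aboveI[of _ 1])
  fix x assume "x \<in> insert 0 {inner_L mu (bip_op mu f) g | f g.
           inner_R mu f f = 1 \<and> inner_L mu g g = 1 \<and> inner_R mu f (\<lambda>_. 1) = 0}"
  then show "x \<le> 1"
  proof
    assume "x \<in> {inner_L mu (bip_op mu f) g | f g.
           inner_R mu f f = 1 \<and> inner_L mu g g = 1 \<and> inner_R mu f (\<lambda>_. 1) = 0}"
    then obtain f g where "x = bip_form mu f g" "inner_R mu f f = 1" "inner_L mu g g = 1"
      unfolding inner_L_bip_op[OF assms] by blast
    then show ?thesis using bip_form_le_half_norms[OF assms, of f g] by simp
  qed simp
qed

lemma bip_lambda_nonneg: "\<forall>e. 0 \<le> mu e \<Longrightarrow> 0 \<le> bip_lambda mu"
  unfolding bip_lambda_def by (rule cSup_upper[OF _ bdd_above_bip_lambda_values]) auto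

lemma bip_form_le_bip_lambda_unit:
  assumes "\<forall>e. 0 \<le> mu e"
    and "inner_R mu f f = 1" "inner_L mu g g = 1" "inner_R mu f (\<lambda>_. 1) = 0"
  shows "bip_form mu f g \<le> bip_lambda mu"
  unfolding bip_lambda_def inner_L_bip_op[OF assms(1), symmetric]
  by (rule cSup_upper[OF _ bdd_above_bip_lambda_values[OF assms(1)]]) (use assms in blast)

lemma bip_lambda_le:
  assumes "0 \<le> b"
    and "\<And>f g. inner_R mu f f = 1 \<Longrightarrow> inner_L mu g g = 1 \<Longrightarrow> inner_R mu f (\<lambda>_. 1) = 0
           \<Longrightarrow> inner_L mu (bip_op mu f) g \<le> b"
  shows "bip_lambda mu \<le> b"
  unfolding bip_lambda_def using assms by (intro cSup_least) auto

lemma bip_form_le_bip_lambda: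
  assumes nonneg: "\<forall>e. 0 \<le> mu e" and orth: "inner_R mu f (\<lambda>_. 1) = 0"
  shows "bip_form mu f g \<le> bip_lambda mu * sqrt (inner_R mu f f) * sqrt (inner_L mu g g)"
proof -
  define a where "a = sqrt (inner_R mu f f)"
  define b where "b = sqrt (inner_L mu g g)"
  have a2: "a * a = inner_R mu f f" and b2: "b * b = inner_L mu g g"
    unfolding a_def b_def using inner_R_self_nonneg[OF nonneg] inner_L_self_nonneg[OF nonneg] by auto
  show ?thesis
  proof (cases "a = 0 \<or> b = 0")
    case True
    then have "bip_form mu f g = 0"
      using a2 b2 bip_form_eq_0_if_inner_R_0[OF nonneg] bip_form_eq_0_if_inner_L_0[OF nonneg] by auto
    then show ?thesis using True bip_lambda_nonneg[OF nonneg] by (auto simp: a_def b_def)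
  next
    case False
    then have "a > 0" "b > 0" by (auto simp: a_def b_def)
      (use inner_R_self_nonneg[OF nonneg, of f] inner_L_self_nonneg[OF nonneg, of g] in linarith)+
    have "inner_R mu (\<lambda>v. f v / a) (\<lambda>v. f v / a) = inner_R mu f f / (a * a)"
      and "inner_L mu (\<lambda>u. g u / b) (\<lambda>u. g u / b) = inner_L mu g g / (b * b)"
      and "inner_R mu (\<lambda>v. f v / a) (\<lambda>_. 1) = inner_R mu f (\<lambda>_. 1) / a"
      and scaled: "bip_form mu (\<lambda>v. f v / a) (\<lambda>u. g u / b) = bip_form mu f g / (a * b)"
      unfolding inner_R_def inner_L_def bip_form_def by (simp_all add: sum_divide_distrib)
    then have "inner_R mu (\<lambda>v. f v / a) (\<lambda>v. f v / a) = 1"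
      and "inner_L mu (\<lambda>u. g u / b) (\<lambda>u. g u / b) = 1"
      and "inner_R mu (\<lambda>v. f v / a) (\<lambda>_. 1) = 0"
      using orth \<open>a > 0\<close> \<open>b > 0\<close> by (simp_all add: a2[symmetric] b2[symmetric])
    then have "bip_form mu f g / (a * b) \<le> bip_lambda mu"
      using bip_form_le_bip_lambda_unit[OF nonneg] scaled by metis
    then show ?thesis using \<open>a > 0\<close> \<open>b > 0\<close> by (simp add: divide_le_eq a_def b_def mult.assoc)
  qed
qed

lemma bip_form_diff_const:
  "bip_form mu (\<lambda>v. f v - c) g = bip_form mu f g - c * (\<Sum>u\<in>UNIV. left_marg mu u * g u)"
  unfolding bip_form_def left_marg_def
  by (simp add: algebra_simps sum_subtractf sum_distrib_left sum_distrib_right)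

lemma inner_R_centered:
  assumes mass: "(\<Sum>v\<in>UNIV. right_marg mu v) = 1"
    and c: "c = (\<Sum>v\<in>UNIV. right_marg mu v * f v)"
  shows "inner_R mu (\<lambda>v. f v - c) (\<lambda>v. f v - c) = inner_R mu f f - c\<^sup>2"
    and "inner_R mu (\<lambda>v. f v - c) (\<lambda>_. 1) = 0"
proof -
  have "inner_R mu (\<lambda>v. f v - c) (\<lambda>v. f v - c)
        = inner_R mu f f - 2 * c * (\<Sum>v\<in>UNIV. right_marg mu v * f v) + c\<^sup>2 * (\<Sum>v\<in>UNIV. right_marg mu v)"
    unfolding inner_R_def
    by (simp add: algebra_simps power2_eq_square sum.distrib sum_subtractf sum_distrib_left)
  then show "inner_R mu (\<lambda>v. f v - c) (\<lambda>v. f v - c) = inner_R mu f f - c\<^sup>2"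
    using mass c by (simp add: power2_eq_square)
  have "inner_R mu (\<lambda>v. f v - c) (\<lambda>_. 1)
        = (\<Sum>v\<in>UNIV. right_marg mu v * f v) - c * (\<Sum>v\<in>UNIV. right_marg mu v)"
    unfolding inner_R_def by (simp add: algebra_simps sum_subtractf sum_distrib_left)
  then show "inner_R mu (\<lambda>v. f v - c) (\<lambda>_. 1) = 0" using mass c by simp
qed

lemma bip_form_le_bip_lambda_add_means:
  assumes nonneg: "\<forall>e. 0 \<le> mu e" and mass: "(\<Sum>v\<in>UNIV. right_marg mu v) = 1"
  shows "bip_form mu f g \<le> bip_lambda mu * sqrt (inner_R mu f f) * sqrt (inner_L mu g g)
           + (\<Sum>v\<in>UNIV. right_marg mu v * f v) * (\<Sum>u\<in>UNIV. left_marg mu u * g u)"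
proof -
  define c where "c = (\<Sum>v\<in>UNIV. right_marg mu v * f v)"
  note centered = inner_R_centered[OF mass c_def]
  have "bip_form mu f g = bip_form mu (\<lambda>v. f v - c) g + c * (\<Sum>u\<in>UNIV. left_marg mu u * g u)"
    by (simp add: bip_form_diff_const)
  also have "bip_form mu (\<lambda>v. f v - c) g
      \<le> bip_lambda mu * sqrt (inner_R mu (\<lambda>v. f v - c) (\<lambda>v. f v - c)) * sqrt (inner_L mu g g)"
    by (rule bip_form_le_bip_lambda[OF nonneg centered(2)])
  also have "\<dots> \<le> bip_lambda mu * sqrt (inner_R mu f f) * sqrt (inner_L mu g g)"
    unfolding centered(1)
    by (intro mult_right_mono mult_left_mono real_sqrt_le_mono bip_lambda_nonneg[OF nonneg])
      (simp_all add: inner_L_self_nonneg[OF nonneg])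
  finally show ?thesis unfolding c_def by simp
qed

lemma sqrt_inner_L_bip_op_le:
  assumes nonneg: "\<forall>e. 0 \<le> mu e" and orth: "inner_R mu f (\<lambda>_. 1) = 0"
  shows "sqrt (inner_L mu (bip_op mu f) (bip_op mu f)) \<le> bip_lambda mu * sqrt (inner_R mu f f)"
proof -
  define n where "n = sqrt (inner_L mu (bip_op mu f) (bip_op mu f))"
  have "n * n = inner_L mu (bip_op mu f) (bip_op mu f)"
    unfolding n_def using inner_L_self_nonneg[OF nonneg] by simp
  also have "\<dots> \<le> bip_lambda mu * sqrt (inner_R mu f f) * n"
    using bip_form_le_bip_lambda[OF nonneg orth, of "bip_op mu f"]
    unfolding n_def inner_L_bip_op[OF nonneg] .
  finally have "n * n \<le> bip_lambda mu * sqrt (inner_R mu f f) * n" .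
  moreover have "0 \<le> bip_lambda mu * sqrt (inner_R mu f f)"
    using bip_lambda_nonneg[OF nonneg] inner_R_self_nonneg[OF nonneg] by simp
  moreover have "0 \<le> n" unfolding n_def using inner_L_self_nonneg[OF nonneg] by simp
  ultimately show ?thesis unfolding n_def[symmetric]
    by (metis mult_right_le_imp_le order_le_less)
qed

lemma edges_nonneg:
  assumes "\<forall>t. 0 \<le> w t"
  shows "\<forall>e. 0 \<le> edges12 w e" and "\<forall>e. 0 \<le> edges13 w e" and "\<forall>e. 0 \<le> edges23 w e"
  using assms by (auto simp: edges12_def edges13_def edges23_def intro!: sum_nonneg)

lemma link1_nonneg: "\<forall>t. 0 \<le> w t \<Longrightarrow> \<forall>e. 0 \<le> link1 w x e"
  by (auto simp: link1_def vert1_def intro!: divide_nonneg_nonneg sum_nonneg)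

lemma left_marg_edges12: "left_marg (edges12 w) x = vert1 w x"
  unfolding left_marg_def edges12_def vert1_def by simp

lemma left_marg_edges13: "left_marg (edges13 w) x = vert1 w x"
  unfolding left_marg_def edges13_def vert1_def using sum.swap by simp

lemma right_marg_edges13: "right_marg (edges13 w) z = right_marg (edges23 w) z"
  unfolding right_marg_def edges13_def edges23_def using sum.swap by simp

lemma right_marg_edges12: "right_marg (edges12 w) y = left_marg (edges23 w) y"
  unfolding right_marg_def left_marg_def edges12_def edges23_def using sum.swap by simp

lemma inner_R_edges13: "inner_R (edges13 w) f h = inner_R (edges23 w) f h"
  unfolding inner_R_def right_marg_edges13 ..

lemma inner_R_edges12: "inner_R (edges12 w) g h = inner_L (edges23 w) g h"
  unfolding inner_R_def inner_L_def right_marg_edges12 ..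

lemma inner_L_edges12: "inner_L (edges12 w) F H = inner_L (edges13 w) F H"
  unfolding inner_L_def left_marg_edges12 left_marg_edges13 ..

lemma left_marg_link1: "left_marg (link1 w x) y = edges12 w (x, y) / vert1 w x"
  unfolding left_marg_def link1_def edges12_def by (simp add: sum_divide_distrib)

lemma right_marg_link1: "right_marg (link1 w x) z = edges13 w (x, z) / vert1 w x"
  unfolding right_marg_def link1_def edges13_def by (simp add: sum_divide_distrib)

lemma sum_vert1: "tri_dist w \<Longrightarrow> (\<Sum>x\<in>UNIV. vert1 w x) = 1"
  unfolding tri_dist_def vert1_def
  by (simp add: sum.cartesian_product UNIV_Times_UNIV[symmetric] del: UNIV_Times_UNIV)

lemma sum_right_marg_edges12: "tri_dist w \<Longrightarrow> (\<Sum>y\<in>UNIV. right_marg (edges12 w) y) = 1"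
  using sum_vert1 by (simp add: sum_left_marg_eq_sum_right_marg[symmetric] left_marg_edges12)

lemma sum_right_marg_link1: "0 < vert1 w x \<Longrightarrow> (\<Sum>z\<in>UNIV. right_marg (link1 w x) z) = 1"
  by (simp add: right_marg_link1 sum_divide_distrib[symmetric] left_marg_edges13[symmetric]
      left_marg_def)

lemma bip_op_edges13_eq_link1_mean:
  "bip_op (edges13 w) f x = (\<Sum>z\<in>UNIV. right_marg (link1 w x) z * f z)"
  unfolding bip_op_def right_marg_link1 left_marg_edges13 by (simp add: sum_divide_distrib)

lemma bip_op_edges12_eq_link1_mean:
  "bip_op (edges12 w) g x = (\<Sum>y\<in>UNIV. left_marg (link1 w x) y * g y)"
  unfolding bip_op_def left_marg_link1 left_marg_edges12 by (simp add: sum_divide_distrib)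

lemma bip_form_edges23:
  assumes "\<forall>t. 0 \<le> w t"
  shows "bip_form (edges23 w) f g = (\<Sum>x\<in>UNIV. vert1 w x * bip_form (link1 w x) f g)"
proof -
  have link: "vert1 w x * bip_form (link1 w x) f g = (\<Sum>y\<in>UNIV. \<Sum>z\<in>UNIV. w (x, y, z) * f z * g y)"
    for x
  proof (cases "vert1 w x = 0")
    case True
    then have "edges12 w (x, y) = 0" for y
      using left_marg_eq_0_imp[OF edges_nonneg(1)[OF assms]] by (simp add: left_marg_edges12)
    then have "w (x, y, z) = 0" for y z
      using assms sum_nonneg_eq_0_iff[of UNIV "\<lambda>z. w (x, y, z)"] by (simp add: edges12_def)
    then show ?thesis using True by simp
  next
    case False
    then show ?thesis unfolding bip_form_def link1_def by (simp add: sum_distrib_left)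
  qed
  have "bip_form (edges23 w) f g = (\<Sum>y\<in>UNIV. \<Sum>z\<in>UNIV. \<Sum>x\<in>UNIV. w (x, y, z) * f z * g y)"
    unfolding bip_form_def edges23_def by (simp add: sum_distrib_right)
  also have "\<dots> = (\<Sum>y\<in>UNIV. \<Sum>x\<in>UNIV. \<Sum>z\<in>UNIV. w (x, y, z) * f z * g y)"
    by (rule sum.cong[OF refl], rule sum.swap)
  also have "\<dots> = (\<Sum>x\<in>UNIV. vert1 w x * bip_form (link1 w x) f g)"
    unfolding link by (rule sum.swap)
  finally show ?thesis .
qed

lemma vert1_bip_form_link1_le:
  assumes nonneg: "\<forall>t. 0 \<le> w t"
    and link_expander: "0 < vert1 w x \<Longrightarrow> bip_lambda (link1 w x) \<le> \<eta>"
  shows "vert1 w x * bip_form (link1 w x) f g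
         \<le> \<eta> / 2 * ((\<Sum>z\<in>UNIV. edges13 w (x, z) * f z * f z) + (\<Sum>y\<in>UNIV. edges12 w (x, y) * g y * g y))
           + vert1 w x * bip_op (edges13 w) f x * bip_op (edges12 w) g x"
proof (cases "vert1 w x = 0")
  case True
  then have "edges12 w (x, y) = 0" "edges13 w (x, z) = 0" for y z
    using left_marg_eq_0_imp[OF edges_nonneg(1)[OF nonneg]] left_marg_eq_0_imp[OF edges_nonneg(2)[OF nonneg]]
    by (simp_all add: left_marg_edges12 left_marg_edges13)
  then show ?thesis using True by simp
next
  case False
  define L where "L = link1 w x"
  define a where "a = inner_R L f f"
  define b where "b = inner_L L g g"
  have p: "0 < vert1 w x"
    using False left_marg_nonneg[OF edges_nonneg(1)[OF nonneg], of x] by (simp add: left_marg_edges12)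
  have nonneg_L: "\<forall>e. 0 \<le> L e" unfolding L_def by (rule link1_nonneg[OF nonneg])
  define F where "F = bip_op (edges13 w) f x"
  define G where "G = bip_op (edges12 w) g x"
  have "0 \<le> bip_lambda L" "bip_lambda L \<le> \<eta>"
    using bip_lambda_nonneg[OF nonneg_L] link_expander[OF p] by (simp_all add: L_def)
  moreover have "0 \<le> a" "0 \<le> b"
    unfolding a_def b_def using inner_R_self_nonneg[OF nonneg_L] inner_L_self_nonneg[OF nonneg_L] by auto
  moreover have "sqrt a * sqrt b \<le> (a + b) / 2"
    using arith_geo_mean_sqrt[OF \<open>0 \<le> a\<close> \<open>0 \<le> b\<close>] by (simp add: real_sqrt_mult)
  ultimately have "bip_lambda L * (sqrt a * sqrt b) \<le> \<eta> * ((a + b) / 2)"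
    by (intro mult_mono) auto
  moreover have "bip_form L f g \<le> bip_lambda L * (sqrt a * sqrt b) + F * G"
    using bip_form_le_bip_lambda_add_means[OF nonneg_L sum_right_marg_link1[OF p, folded L_def], of f g]
    unfolding a_def b_def F_def G_def L_def bip_op_edges13_eq_link1_mean bip_op_edges12_eq_link1_mean
    by (simp add: mult.assoc)
  ultimately have "vert1 w x * bip_form L f g \<le> vert1 w x * (\<eta> * ((a + b) / 2) + F * G)"
    using p by (intro mult_left_mono) auto
  also have "\<dots> = \<eta> / 2 * (vert1 w x * a + vert1 w x * b) + vert1 w x * F * G"
    by (simp add: algebra_simps)
  also have "vert1 w x * a = (\<Sum>z\<in>UNIV. edges13 w (x, z) * f z * f z)"
    unfolding a_def L_def inner_R_def right_marg_link1 using False by (simp add: sum_distrib_left)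
  also have "vert1 w x * b = (\<Sum>y\<in>UNIV. edges12 w (x, y) * g y * g y)"
    unfolding b_def L_def inner_L_def left_marg_link1 using False by (simp add: sum_distrib_left)
  finally show ?thesis unfolding L_def F_def G_def .
qed

lemma bip_form_edges12_bip_op_edges13_le:
  assumes dist: "tri_dist w" and orth: "inner_R (edges23 w) f (\<lambda>_. 1) = 0"
  shows "bip_form (edges12 w) g (bip_op (edges13 w) f)
         \<le> bip_lambda (edges12 w) * sqrt (inner_L (edges23 w) g g)
           * (bip_lambda (edges13 w) * sqrt (inner_R (edges23 w) f f))"
proof -
  have nonneg: "\<forall>t. 0 \<le> w t" using dist by (simp add: tri_dist_def)
  define F where "F = bip_op (edges13 w) f"
  have "(\<Sum>x\<in>UNIV. left_marg (edges12 w) x * F x) = inner_L (edges13 w) F (\<lambda>_. 1)"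
    unfolding inner_L_def left_marg_edges12 left_marg_edges13 by simp
  also have "\<dots> = inner_R (edges23 w) f (\<lambda>_. 1)"
    unfolding F_def inner_L_bip_op[OF edges_nonneg(2)[OF nonneg]] inner_R_const_one[symmetric]
    by (rule inner_R_edges13)
  finally have mean_F: "(\<Sum>x\<in>UNIV. left_marg (edges12 w) x * F x) = 0" using orth by simp
  have "bip_form (edges12 w) g F
        \<le> bip_lambda (edges12 w) * sqrt (inner_L (edges23 w) g g) * sqrt (inner_L (edges13 w) F F)"
    using bip_form_le_bip_lambda_add_means[OF edges_nonneg(1)[OF nonneg] sum_right_marg_edges12[OF dist],
        of g F]
    unfolding mean_F inner_R_edges12 inner_L_edges12 by simp
  also have "\<dots> \<le> bip_lambda (edges12 w) * sqrt (inner_L (edges23 w) g g)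
                     * (bip_lambda (edges13 w) * sqrt (inner_R (edges23 w) f f))"
    using sqrt_inner_L_bip_op_le[OF edges_nonneg(2)[OF nonneg], of f] orth
      bip_lambda_nonneg[OF edges_nonneg(1)[OF nonneg]] inner_L_self_nonneg[OF edges_nonneg(3)[OF nonneg]]
    unfolding F_def inner_R_edges13 by (intro mult_left_mono) auto
  finally show ?thesis unfolding F_def .
qed

lemma bip_form_edges23_le:
  assumes dist: "tri_dist w"
    and link_expander: "\<And>x. 0 < vert1 w x \<Longrightarrow> bip_lambda (link1 w x) \<le> \<eta>"
    and f: "inner_R (edges23 w) f f = 1" "inner_R (edges23 w) f (\<lambda>_. 1) = 0"
    and g: "inner_L (edges23 w) g g = 1"
  shows "bip_form (edges23 w) f g \<le> \<eta> + bip_lambda (edges12 w) * bip_lambda (edges13 w)"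
proof -
  have nonneg: "\<forall>t. 0 \<le> w t" using dist by (simp add: tri_dist_def)
  define F where "F = bip_op (edges13 w) f"
  define G where "G = bip_op (edges12 w) g"
  have sum_f: "(\<Sum>x\<in>UNIV. \<Sum>z\<in>UNIV. edges13 w (x, z) * f z * f z) = 1"
    using f(1) inner_R_eq_sum_edges[of "edges13 w" f f] inner_R_edges13[of w f f] by simp
  have sum_g: "(\<Sum>x\<in>UNIV. \<Sum>y\<in>UNIV. edges12 w (x, y) * g y * g y) = 1"
    using g inner_R_eq_sum_edges[of "edges12 w" g g] inner_R_edges12[of w g g] by simp
  have sum_FG: "(\<Sum>x\<in>UNIV. vert1 w x * F x * G x) = bip_form (edges12 w) g F"
    unfolding inner_L_bip_op[OF edges_nonneg(1)[OF nonneg], symmetric] inner_L_def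
      left_marg_edges12 G_def by (simp add: mult.commute mult.left_commute)
  have "bip_form (edges23 w) f g = (\<Sum>x\<in>UNIV. vert1 w x * bip_form (link1 w x) f g)"
    by (rule bip_form_edges23[OF nonneg])
  also have "\<dots> \<le> (\<Sum>x\<in>UNIV. \<eta> / 2 * ((\<Sum>z\<in>UNIV. edges13 w (x, z) * f z * f z)
                                    + (\<Sum>y\<in>UNIV. edges12 w (x, y) * g y * g y))
                          + vert1 w x * F x * G x)"
    unfolding F_def G_def by (intro sum_mono vert1_bip_form_link1_le[OF nonneg link_expander])
  also have "\<dots> = \<eta> + bip_form (edges12 w) g F"
    by (simp only: sum.distrib sum_distrib_left[symmetric] sum_f sum_g sum_FG) simp
  also have "\<dots> \<le> \<eta> + bip_lambda (edges12 w) * bip_lambda (edges13 w)"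
    using bip_form_edges12_bip_op_edges13_le[OF dist f(2), of g] f(1) g unfolding F_def by simp
  finally show ?thesis .
qed

theorem lemma4p9:
  fixes w :: "'a::finite \<times> 'b::finite \<times> 'c::finite \<Rightarrow> real" and \<eta> :: real
  assumes "tri_dist w"
    and "\<And>x. vert1 w x > 0 \<Longrightarrow> bip_expander (link1 w x) \<eta>"
  shows "bip_lambda (edges23 w) \<le> \<eta> + bip_lambda (edges12 w) * bip_lambda (edges13 w)"
proof (rule bip_lambda_le)
  have nonneg: "\<forall>t. 0 \<le> w t" using assms(1) by (simp add: tri_dist_def)
  have link_expander: "0 < vert1 w x \<Longrightarrow> bip_lambda (link1 w x) \<le> \<eta>" for x
    using assms(2) by (simp add: bip_expander_def)
  obtain x where "0 < vert1 w x"
    using sum_vert1[OF assms(1)] left_marg_nonneg[OF edges_nonneg(1)[OF nonneg]]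
    by (metis left_marg_edges12 order_le_neq_trans sum.neutral zero_neq_one)
  then have "0 \<le> \<eta>"
    using link_expander bip_lambda_nonneg[OF link1_nonneg[OF nonneg]] order_trans by blast
  then show "0 \<le> \<eta> + bip_lambda (edges12 w) * bip_lambda (edges13 w)"
    using bip_lambda_nonneg[OF edges_nonneg(1)[OF nonneg]] bip_lambda_nonneg[OF edges_nonneg(2)[OF nonneg]]
    by simp
  show "inner_L (edges23 w) (bip_op (edges23 w) f) g \<le> \<eta> + bip_lambda (edges12 w) * bip_lambda (edges13 w)"
    if "inner_R (edges23 w) f f = 1" "inner_L (edges23 w) g g = 1" "inner_R (edges23 w) f (\<lambda>_. 1) = 0"
    for f g
    using bip_form_edges23_le[OF assms(1) link_expander that(1,3,2)]
    by (simp add: inner_L_bip_op[OF edges_nonneg(3)[OF nonneg]])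
qed

end
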